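(* Let $p,b\in\mathbb{R}^K$ with $p_1\ge p_2\ge\dots\ge p_K\ge0$, $\sum_{i=1}^Kp_i=1$, and $b_i\ge0$ for all $i$. Then $$\sum_{i=1}^Kp_ib_i^2-\Big[\sum_{i=1}^Kp_ib_i\Big]^2\ge p_1\sum_{j=2}^Kp_j\,[b_1-b_j]^2.$$ *)

theory Defs
  imports Complex_Main
begin

end

theory Submission
  imports Defs
begin

text \<open>Twice the weighted variance equals the weighted sum of all squared differences
  p i p j (b i - b j)^2; discarding every term that does not involve the index 1
  leaves twice the right-hand side.\<close>

lemma sum_pairwise_weighted_square_diff:
  fixes p b :: "'a \<Rightarrow> 'b::comm_ring_1"
  shows "(\<Sum>i\<in>A. \<Sum>j\<in>A. p i * p j * (b i - b j)^2)
           = 2 * ((\<Sum>i\<in>A. p i) * (\<Sum>i\<in>A. p i * (b i)^2) - (\<Sum>i\<in>A. p i * b i)^2)"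
proof -
  have "(\<Sum>i\<in>A. \<Sum>j\<in>A. p i * p j * (b i - b j)^2)
      = (\<Sum>i\<in>A. \<Sum>j\<in>A. p i * (p j * (b j)^2)) + (\<Sum>i\<in>A. \<Sum>j\<in>A. (p i * (b i)^2) * p j)
        - 2 * (\<Sum>i\<in>A. \<Sum>j\<in>A. (p i * b i) * (p j * b j))"
    by (simp add: sum_subtractf sum.distrib sum_distrib_left power2_diff algebra_simps)
  also have "\<dots> = 2 * ((\<Sum>i\<in>A. p i) * (\<Sum>i\<in>A. p i * (b i)^2) - (\<Sum>i\<in>A. p i * b i)^2)"
    by (simp only: sum_product [symmetric] power2_eq_square) (simp add: algebra_simps)
  finally show ?thesis .
qed

lemma double_sum_ge_row_plus_column:
  fixes f :: "'a \<Rightarrow> 'a \<Rightarrow> 'b::{semiring_1, ordered_comm_monoid_add}"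
  assumes "finite A" "a \<in> A" and nonneg: "\<And>i j. i \<in> A \<Longrightarrow> j \<in> A \<Longrightarrow> 0 \<le> f i j"
  shows "(\<Sum>j\<in>A - {a}. f a j) + (\<Sum>i\<in>A - {a}. f i a) \<le> (\<Sum>i\<in>A. \<Sum>j\<in>A. f i j)"
proof -
  have "(\<Sum>j\<in>A - {a}. f a j) \<le> (\<Sum>j\<in>A. f a j)"
    using assms by (intro sum_mono2) auto
  moreover have "(\<Sum>i\<in>A - {a}. f i a) \<le> (\<Sum>i\<in>A - {a}. \<Sum>j\<in>A. f i j)"
    using assms by (intro sum_mono member_le_sum) auto
  moreover have "(\<Sum>i\<in>A. \<Sum>j\<in>A. f i j) = (\<Sum>j\<in>A. f a j) + (\<Sum>i\<in>A - {a}. \<Sum>j\<in>A. f i j)"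
    using assms by (subst sum.remove) auto
  ultimately show ?thesis
    by (metis add_mono)
qed

lemma weighted_variance_ge:
  fixes p b :: "'a \<Rightarrow> real"
  assumes "finite A" "a \<in> A"
    and nonneg: "\<And>i. i \<in> A \<Longrightarrow> 0 \<le> p i"
    and sum1: "(\<Sum>i\<in>A. p i) = 1"
  shows "p a * (\<Sum>j\<in>A - {a}. p j * (b a - b j)^2)
           \<le> (\<Sum>i\<in>A. p i * (b i)^2) - (\<Sum>i\<in>A. p i * b i)^2"
proof -
  define f where "f i j = p i * p j * (b i - b j)^2" for i j
  have "(\<Sum>j\<in>A - {a}. f a j) = p a * (\<Sum>j\<in>A - {a}. p j * (b a - b j)^2)"
    "(\<Sum>i\<in>A - {a}. f i a) = p a * (\<Sum>j\<in>A - {a}. p j * (b a - b j)^2)"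
    by (simp_all add: f_def sum_distrib_left power2_commute algebra_simps)
  moreover have "(\<Sum>j\<in>A - {a}. f a j) + (\<Sum>i\<in>A - {a}. f i a) \<le> (\<Sum>i\<in>A. \<Sum>j\<in>A. f i j)"
    using assms by (intro double_sum_ge_row_plus_column) (auto simp: f_def)
  ultimately show ?thesis
    using sum1 by (simp add: f_def sum_pairwise_weighted_square_diff)
qed

theorem lemma9:
  fixes p b :: "nat \<Rightarrow> real" and K :: nat
  assumes mono: "\<And>i j. 1 \<le> i \<Longrightarrow> i \<le> j \<Longrightarrow> j \<le> K \<Longrightarrow> p j \<le> p i"
    and nonneg: "\<And>i. 1 \<le> i \<Longrightarrow> i \<le> K \<Longrightarrow> p i \<ge> 0"
    and sum1: "(\<Sum>i=1..K. p i) = 1"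
    and bnonneg: "\<And>i. 1 \<le> i \<Longrightarrow> i \<le> K \<Longrightarrow> b i \<ge> 0"
  shows "(\<Sum>i=1..K. p i * (b i)^2) - (\<Sum>i=1..K. p i * b i)^2
           \<ge> p 1 * (\<Sum>j=2..K. p j * (b 1 - b j)^2)"
proof -
  have "1 \<in> {1..K}"
    using sum1 by (cases K) auto
  moreover have "{1..K} - {1} = {2..K}"
    by auto
  ultimately show ?thesis
    using weighted_variance_ge [of "{1..K}" 1 p b] nonneg sum1 by simp
qed

end
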